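(* Consider $N$ advertisers with click-through rates $c_i\in(0,1]$, abandonment probabilities $\gamma_i\ge0$, $\mu_i=c_i+\gamma_i\le 1$, and private values per click $v_i\ge0$, indexed so that $\frac{c_1v_1}{\mu_1}\ge\dots\ge\frac{c_Nv_N}{\mu_N}$. Let $b_{N+1}=0$ and $b_i=\frac{\mu_i}{c_i}\big[v_ic_i+(1-\mu_i)\frac{b_{i+1}c_{i+1}}{\mu_{i+1}}\big]$ for $i=N,\dots,1$. Then the search engine's expected revenue under the CE mechanism with bids $(b_1,\dots,b_N)$ equals its expected revenue under the VCG mechanism with truthful bids $b_i=v_i$ for all $i$.
   Context: Click model: users view ads top to bottom; having viewed the ad at position $k$ the user clicks it with probability $c$ of that ad, abandons with probability $\gamma$ of that ad, and otherwise moves on; so the ad at position $k$ in order $(1),\dots,(N)$ is clicked with probability $c_{(k)}\prod_{l<k}(1-\mu_{(l)})$. Search engine expected revenue is $\sum_k p_{(k)}c_{(k)}\prod_{l<k}(1-\mu_{(l)})$. CE mechanism: with $w=c/\mu$, ads are ranked in descending order of $wb$ and the ad at position $i$ pays per click $\frac{b_{i+1}c_{i+1}\mu_i}{\mu_{i+1}c_i}$, where $i+1$ is the ad immediately below (bottom ad pays $0$). VCG mechanism: ads are ranked in descending order of $\frac{b c}{\mu}$ and the ad at position $i$ pays per click $\frac{\mu_i}{c_i}\sum_{j=i+1}^{N}b_jc_j\prod_{k=i+1}^{j-1}(1-\mu_k)$ (indices referring to positions). *)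

theory Defs
  imports Main "HOL.Real"
begin

text \<open>Ads are indexed 1..N. A ranking is a list of ad indices, position k (0-based)
  holding the ad  ord ! k. Rankings are produced by a stable sort on the descending key,
  i.e. ties are broken in favour of the lower index.\<close>

definition rank_desc :: "(nat \<Rightarrow> real) \<Rightarrow> nat \<Rightarrow> nat list" where
  "rank_desc key N = sort_key (\<lambda>i. - key i) [1..<N+1]"

definition click_prob :: "nat list \<Rightarrow> (nat \<Rightarrow> real) \<Rightarrow> (nat \<Rightarrow> real) \<Rightarrow> nat \<Rightarrow> real" where
  "click_prob ord c \<mu> k = c (ord ! k) * (\<Prod>l<k. (1 - \<mu> (ord ! l)))"

definition revenue :: "nat list \<Rightarrow> (nat \<Rightarrow> real) \<Rightarrow> (nat \<Rightarrow> real) \<Rightarrow> (nat \<Rightarrow> real) \<Rightarrow> real" where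
  "revenue ord price c \<mu> = (\<Sum>k<length ord. price k * click_prob ord c \<mu> k)"

definition CE_order :: "(nat \<Rightarrow> real) \<Rightarrow> (nat \<Rightarrow> real) \<Rightarrow> (nat \<Rightarrow> real) \<Rightarrow> nat \<Rightarrow> nat list" where
  "CE_order b c \<mu> N = rank_desc (\<lambda>i. (c i / \<mu> i) * b i) N"

definition CE_price :: "nat list \<Rightarrow> (nat \<Rightarrow> real) \<Rightarrow> (nat \<Rightarrow> real) \<Rightarrow> (nat \<Rightarrow> real) \<Rightarrow> nat \<Rightarrow> real" where
  "CE_price ord b c \<mu> k =
     (if Suc k < length ord then
        b (ord ! Suc k) * c (ord ! Suc k) * \<mu> (ord ! k) / (\<mu> (ord ! Suc k) * c (ord ! k))
      else 0)"

definition CE_revenue :: "(nat \<Rightarrow> real) \<Rightarrow> (nat \<Rightarrow> real) \<Rightarrow> (nat \<Rightarrow> real) \<Rightarrow> nat \<Rightarrow> real" where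
  "CE_revenue b c \<mu> N = (let ord = CE_order b c \<mu> N in revenue ord (CE_price ord b c \<mu>) c \<mu>)"

definition VCG_order :: "(nat \<Rightarrow> real) \<Rightarrow> (nat \<Rightarrow> real) \<Rightarrow> (nat \<Rightarrow> real) \<Rightarrow> nat \<Rightarrow> nat list" where
  "VCG_order b c \<mu> N = rank_desc (\<lambda>i. b i * c i / \<mu> i) N"

definition VCG_price :: "nat list \<Rightarrow> (nat \<Rightarrow> real) \<Rightarrow> (nat \<Rightarrow> real) \<Rightarrow> (nat \<Rightarrow> real) \<Rightarrow> nat \<Rightarrow> real" where
  "VCG_price ord b c \<mu> k =
     \<mu> (ord ! k) / c (ord ! k) *
     (\<Sum>j\<in>{Suc k..<length ord}. b (ord ! j) * c (ord ! j) * (\<Prod>m\<in>{Suc k..<j}. (1 - \<mu> (ord ! m))))"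

definition VCG_revenue :: "(nat \<Rightarrow> real) \<Rightarrow> (nat \<Rightarrow> real) \<Rightarrow> (nat \<Rightarrow> real) \<Rightarrow> nat \<Rightarrow> real" where
  "VCG_revenue b c \<mu> N = (let ord = VCG_order b c \<mu> N in revenue ord (VCG_price ord b c \<mu>) c \<mu>)"

end

theory Submission
  imports Defs
begin

text \<open>Write \<open>B i = b i c i / \<mu> i\<close> for the CE score of ad \<open>i\<close> and \<open>x i = c i v i / \<mu> i\<close> for its
  VCG score. The bid recursion says \<open>B i = \<mu> i x i + (1 - \<mu> i) B (i+1)\<close>, so \<open>B i\<close> is a convex
  combination of \<open>x i\<close> and \<open>B (i+1)\<close>; since the \<open>x i\<close> are nonincreasing, downward induction gives
  \<open>B (i+1) \<le> x (i+1) \<le> x i\<close> and hence \<open>B (i+1) \<le> B i\<close>. So both mechanisms rank the ads in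
  index order. Unfolding the recursion, \<open>B (k+2)\<close> is exactly the discounted tail sum appearing in
  the VCG price of position \<open>k+1\<close>, and the CE price of that position is \<open>\<mu>/c\<close> times \<open>B (k+2)\<close>,
  so the two price vectors, and therefore the revenues, coincide.\<close>

lemma rank_desc_eq_upt:
  assumes "\<And>i. i \<in> {1..<N} \<Longrightarrow> key (Suc i) \<le> key i"
  shows "rank_desc key N = [1..<N+1]"
  unfolding rank_desc_def
proof (rule sort_key_id_if_sorted)
  show "sorted (map (\<lambda>i. - key i) [1..<N+1])"
    unfolding sorted_iff_nth_Suc
    using assms by (auto simp: nth_upt simp del: upt_Suc)
qed

context
  fixes B m :: "nat \<Rightarrow> real" and N :: nat
  assumes B_end: "B (Suc N) = 0"
begin

lemma recurrence_le_antitone_target: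
  assumes rec: "\<And>i. i \<in> {1..N} \<Longrightarrow> B i = m i * x i + (1 - m i) * B (Suc i)"
      and m_le_1: "\<And>i. i \<in> {1..N} \<Longrightarrow> m i \<le> 1"
      and x_antitone: "\<And>i. i \<in> {1..<N} \<Longrightarrow> x (Suc i) \<le> x i"
      and x_nonneg: "0 \<le> x N"
      and i: "i \<in> {1..N}"
  shows "B i \<le> x i"
proof -
  from i have "i \<le> N" by simp
  then show ?thesis
  proof (induction i rule: inc_induct)
    case base
    have "B N = m N * x N" using rec[of N] i B_end by simp
    also have "\<dots> \<le> x N" using mult_right_mono[OF m_le_1[of N] x_nonneg] i by simp
    finally show ?case .
  next
    case (step n)
    have n: "n \<in> {1..N}" "n \<in> {1..<N}" using step.hyps i by auto
    have "B (Suc n) \<le> x n" using step.IH x_antitone[OF n(2)] by simp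
    then have "(1 - m n) * B (Suc n) \<le> (1 - m n) * x n"
      using m_le_1[OF n(1)] by (intro mult_left_mono) auto
    then show ?case using rec[OF n(1)] by (simp add: algebra_simps)
  qed
qed

lemma recurrence_antitone:
  assumes rec: "\<And>i. i \<in> {1..N} \<Longrightarrow> B i = m i * x i + (1 - m i) * B (Suc i)"
      and m_bounds: "\<And>i. i \<in> {1..N} \<Longrightarrow> 0 \<le> m i \<and> m i \<le> 1"
      and x_antitone: "\<And>i. i \<in> {1..<N} \<Longrightarrow> x (Suc i) \<le> x i"
      and x_nonneg: "0 \<le> x N"
      and i: "i \<in> {1..<N}"
  shows "B (Suc i) \<le> B i"
proof -
  have "B (Suc i) \<le> x i"
    using recurrence_le_antitone_target[OF rec _ x_antitone x_nonneg, of "Suc i"] m_bounds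
      x_antitone[OF i] i by fastforce
  then have "m i * B (Suc i) \<le> m i * x i"
    using m_bounds[of i] i by (intro mult_left_mono) auto
  then show ?thesis using rec[of i] i by (simp add: algebra_simps)
qed

lemma recurrence_eq_tail_sum:
  assumes rec: "\<And>i. i \<in> {1..N} \<Longrightarrow> B i = a i + (1 - m i) * B (Suc i)"
      and i: "1 \<le> i" "i \<le> Suc N"
  shows "B i = (\<Sum>j\<in>{i..N}. a j * (\<Prod>l\<in>{i..<j}. 1 - m l))"
  using i(2)
proof (induction i rule: inc_induct)
  case base
  show ?case using B_end by simp
next
  case (step n)
  have tail: "(\<Sum>j\<in>{Suc n..N}. a j * (\<Prod>l\<in>{n..<j}. 1 - m l))
      = (1 - m n) * (\<Sum>j\<in>{Suc n..N}. a j * (\<Prod>l\<in>{Suc n..<j}. 1 - m l))"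
    by (simp add: sum_distrib_left prod.atLeast_Suc_lessThan mult_ac)
  have "(\<Sum>j\<in>{n..N}. a j * (\<Prod>l\<in>{n..<j}. 1 - m l))
      = a n + (\<Sum>j\<in>{Suc n..N}. a j * (\<Prod>l\<in>{n..<j}. 1 - m l))"
    using step.hyps by (simp add: sum.atLeast_Suc_atMost)
  also have "\<dots> = B n" using tail step rec[of n] i(1) by simp
  finally show ?case by simp
qed

end

lemma CE_price_upt:
  assumes "b (Suc N) = 0" and "k < N"
  shows "CE_price [1..<N+1] b c \<mu> k
       = \<mu> (Suc k) / c (Suc k) * (b (Suc (Suc k)) * c (Suc (Suc k)) / \<mu> (Suc (Suc k)))"
proof (cases "Suc k < N")
  case True
  then show ?thesis by (simp add: CE_price_def nth_upt mult_ac del: upt_Suc)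
next
  case False
  then have "Suc k = N" using assms(2) by simp
  then show ?thesis using assms(1) by (simp add: CE_price_def)
qed

lemma VCG_price_upt:
  assumes "k < N"
  shows "VCG_price [1..<N+1] v c \<mu> k
       = \<mu> (Suc k) / c (Suc k) *
         (\<Sum>j\<in>{Suc (Suc k)..N}. v j * c j * (\<Prod>l\<in>{Suc (Suc k)..<j}. 1 - \<mu> l))"
proof -
  have "(\<Sum>j\<in>{Suc k..<N}. v (Suc j) * c (Suc j) * (\<Prod>l\<in>{Suc k..<j}. 1 - \<mu> (Suc l)))
      = (\<Sum>j\<in>{Suc (Suc k)..<Suc N}. v j * c j * (\<Prod>l\<in>{Suc (Suc k)..<j}. 1 - \<mu> l))"
    by (simp only: sum.shift_bounds_Suc_ivl prod.shift_bounds_Suc_ivl)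
  moreover have "(\<Sum>j\<in>{Suc k..<N}. v ([1..<N+1] ! j) * c ([1..<N+1] ! j) *
        (\<Prod>l\<in>{Suc k..<j}. 1 - \<mu> ([1..<N+1] ! l)))
      = (\<Sum>j\<in>{Suc k..<N}. v (Suc j) * c (Suc j) * (\<Prod>l\<in>{Suc k..<j}. 1 - \<mu> (Suc l)))"
    by (intro sum.cong prod.cong) (auto simp: nth_upt simp del: upt_Suc)
  ultimately show ?thesis
    using assms by (simp add: VCG_price_def atLeastLessThanSuc_atLeastAtMost del: upt_Suc)
qed

theorem theorem5:
  fixes N :: nat and c \<gamma> \<mu> v b :: "nat \<Rightarrow> real"
  assumes c_pos: "\<forall>i\<in>{1..N}. 0 < c i \<and> c i \<le> 1"
      and gamma_nonneg: "\<forall>i\<in>{1..N}. 0 \<le> \<gamma> i"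
      and mu_def: "\<forall>i\<in>{1..N}. \<mu> i = c i + \<gamma> i"
      and mu_le1: "\<forall>i\<in>{1..N}. \<mu> i \<le> 1"
      and v_nonneg: "\<forall>i\<in>{1..N}. 0 \<le> v i"
      and sorted: "\<forall>i\<in>{1..<N}. c (Suc i) * v (Suc i) / \<mu> (Suc i) \<le> c i * v i / \<mu> i"
      and b_last: "b (N + 1) = 0"
      and b_rec: "\<forall>i\<in>{1..N}. b i = \<mu> i / c i *
                     (v i * c i + (1 - \<mu> i) * (b (Suc i) * c (Suc i) / \<mu> (Suc i)))"
  shows "CE_revenue b c \<mu> N = VCG_revenue v c \<mu> N"
proof -
  define B where "B i = b i * c i / \<mu> i" for i
  define x where "x i = c i * v i / \<mu> i" for i
  have pos: "0 < c i" "0 < \<mu> i" if "i \<in> {1..N}" for i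
    using c_pos gamma_nonneg mu_def that by (smt (verit))+
  have B_end: "B (Suc N) = 0" using b_last by (simp add: B_def)
  have B_rec: "B i = v i * c i + (1 - \<mu> i) * B (Suc i)" if "i \<in> {1..N}" for i
    using b_rec pos[OF that] that by (simp add: B_def)
  have B_rec_x: "B i = \<mu> i * x i + (1 - \<mu> i) * B (Suc i)" if "i \<in> {1..N}" for i
    using B_rec[OF that] pos[OF that] by (simp add: x_def)
  have B_antitone: "B (Suc i) \<le> B i" if "i \<in> {1..<N}" for i
  proof (rule recurrence_antitone[OF B_end B_rec_x _ _ _ that])
    show "0 \<le> x N" using pos[of N] v_nonneg that by (simp add: x_def)
  qed (use pos mu_le1 sorted in \<open>auto simp: x_def less_imp_le\<close>)
  have orders: "CE_order b c \<mu> N = [1..<N+1]" "VCG_order v c \<mu> N = [1..<N+1]"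
    unfolding CE_order_def VCG_order_def
    by (rule rank_desc_eq_upt, use B_antitone sorted in \<open>simp add: B_def mult.commute\<close>)+
  have "CE_price [1..<N+1] b c \<mu> k = VCG_price [1..<N+1] v c \<mu> k" if "k < N" for k
  proof -
    have "CE_price [1..<N+1] b c \<mu> k = \<mu> (Suc k) / c (Suc k) * B (Suc (Suc k))"
      using CE_price_upt[OF _ that] b_last by (simp add: B_def)
    also have "\<dots> = VCG_price [1..<N+1] v c \<mu> k"
      using VCG_price_upt[OF that] recurrence_eq_tail_sum[OF B_end B_rec, of "Suc (Suc k)"] that
      by simp
    finally show ?thesis .
  qed
  then show ?thesis
    unfolding CE_revenue_def VCG_revenue_def Let_def orders revenue_def
    by (intro sum.cong) auto
qed

end
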